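(* Let $G$ be a finite simple graph with maximum degree at most $3$ and let $CG$ be its clawed graph, with $n=|E(CG)|$. Then $M_2(CG)\simeq S^{\frac{2}{3}n-1}$.
   Context: For a graph $G$ of maximum degree at most $3$, the clawed graph $CG$ is obtained by subdividing every edge of $G$ (replacing $\{u,v\}$ by a new vertex $w$ and edges $\{u,w\},\{w,v\}$) and then attaching new leaves (pendant edges to new vertices) to every original vertex $v\in V(G)$ so that every original vertex has degree exactly $3$. A $2$-matching of a graph is a set of edges such that every vertex has degree at most $2$ in it. The $2$-matching complex $M_2(G)$ is the simplicial complex whose vertices are the edges of $G$ and whose faces are the $2$-matchings of $G$. $\simeq$ denotes homotopy equivalence. *)

theory Defs
  imports "HOL-Analysis.Analysis"
begin

definition simple_graph :: "'v set \<Rightarrow> 'v set set \<Rightarrow> bool" where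
  "simple_graph V E \<longleftrightarrow> finite V \<and> (\<forall>e\<in>E. \<exists>u w. u \<noteq> w \<and> e = {u, w} \<and> u \<in> V \<and> w \<in> V)"

definition degree :: "'v set set \<Rightarrow> 'v \<Rightarrow> nat" where
  "degree E v = card {e \<in> E. v \<in> e}"

definition max_degree_le :: "'v set \<Rightarrow> 'v set set \<Rightarrow> nat \<Rightarrow> bool" where
  "max_degree_le V E d \<longleftrightarrow> (\<forall>v\<in>V. degree E v \<le> d)"

text \<open>Clawed graph. Vertices: Inl v (original vertices), Inr (Inl e) (subdivision vertex of
  edge e), Inr (Inr (v,i)) with i < 3 - deg v (new leaves attached to v).\<close>
type_synonym 'v cvert = "'v + ('v set + ('v \<times> nat))"

definition claw_vertices :: "'v set \<Rightarrow> 'v set set \<Rightarrow> 'v cvert set" where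
  "claw_vertices V E = Inl ` V \<union> (Inr \<circ> Inl) ` E
     \<union> {Inr (Inr (v, i)) | v i. v \<in> V \<and> i < 3 - degree E v}"

definition claw_edges :: "'v set \<Rightarrow> 'v set set \<Rightarrow> 'v cvert set set" where
  "claw_edges V E = {{Inl u, Inr (Inl e)} | u e. e \<in> E \<and> u \<in> e}
     \<union> {{Inl v, Inr (Inr (v, i))} | v i. v \<in> V \<and> i < 3 - degree E v}"

definition two_matching :: "'w set set \<Rightarrow> 'w set set \<Rightarrow> bool" where
  "two_matching F M \<longleftrightarrow> M \<subseteq> F \<and> (\<forall>x. card {e \<in> M. x \<in> e} \<le> 2)"

definition two_matching_complex :: "'w set set \<Rightarrow> 'w set set set" where
  "two_matching_complex F = {M. two_matching F M}"

text \<open>Geometric realization of a finite abstract simplicial complex K (a set of faces,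
  each a finite set of vertices of type 'a): the union over faces \<sigma> of the standard simplices
  {x. x \<ge> 0, supp x \<subseteq> \<sigma>, \<Sum> x = 1}, with the subspace topology of the product topology on
  'a \<Rightarrow> real (which agrees with the Euclidean topology on finitely many coordinates).\<close>
definition realization_set :: "'a set set \<Rightarrow> ('a \<Rightarrow> real) set" where
  "realization_set K = (\<Union>\<sigma>\<in>K. {x. (\<forall>i. 0 \<le> x i) \<and> (\<forall>i. i \<notin> \<sigma> \<longrightarrow> x i = 0)
                                   \<and> (\<Sum>i\<in>\<sigma>. x i) = 1})"

definition realization :: "'a set set \<Rightarrow> ('a \<Rightarrow> real) topology" where
  "realization K = subtopology (powertop_real UNIV) (realization_set K)"

end

theory Submission
  imports Defs
begin

text \<open>In the clawed graph every edge joins an original vertex v to a vertex of degree at most 2,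
  and the star of v consists of exactly three edges; these stars partition the edge set. Hence a
  set of edges is a 2-matching iff it contains no complete star, so M_2(CG) is the join of |V|
  boundaries of triangles, i.e. of |V| circles, which is a (2|V| - 1)-sphere.

  A point of the realization carries in each triangle weights
  (a0, a1, a2) with some ap = 0, and such a triple is determined by (a0 - a2, a1 - a2), since
  a2 = - min (a0 - a2) (a1 - a2) 0. Collecting these differences gives a nonzero vector of
  R^(2|V|), and radial projection maps the realization homeomorphically onto the unit sphere.\<close>

section \<open>Joins of boundaries of simplices\<close>

text \<open>For a family P of pairwise disjoint sets: the join of the boundaries of the simplices in P.\<close>
definition boundary_join :: "'a set set \<Rightarrow> 'a set set" where
  "boundary_join P = {\<sigma>. \<sigma> \<subseteq> \<Union>P \<and> (\<forall>B\<in>P. \<not> B \<subseteq> \<sigma>)}"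

lemma realization_set_boundary_join:
  assumes "finite (\<Union>P)"
  shows "realization_set (boundary_join P) =
    {x. (\<forall>a. 0 \<le> x a) \<and> (\<forall>a. a \<notin> \<Union>P \<longrightarrow> x a = 0) \<and> sum x (\<Union>P) = 1
        \<and> (\<forall>B\<in>P. \<exists>a\<in>B. x a = 0)}"
    (is "_ = ?R")
proof
  show "realization_set (boundary_join P) \<subseteq> ?R"
  proof
    fix x assume "x \<in> realization_set (boundary_join P)"
    then obtain \<sigma> where \<sigma>: "\<sigma> \<subseteq> \<Union>P" "\<forall>B\<in>P. \<not> B \<subseteq> \<sigma>"
      and x: "\<forall>a. 0 \<le> x a" "\<forall>a. a \<notin> \<sigma> \<longrightarrow> x a = 0" "sum x \<sigma> = 1"
      by (auto simp: realization_set_def boundary_join_def)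
    have "sum x (\<Union>P) = sum x \<sigma>"
      using x(2) by (intro sum.mono_neutral_right [OF assms \<sigma>(1)]) auto
    moreover have "\<forall>B\<in>P. \<exists>a\<in>B. x a = 0" and "\<forall>a. a \<notin> \<Union>P \<longrightarrow> x a = 0"
      using \<sigma> x(2) by blast+
    ultimately show "x \<in> ?R" using x(1,3) by simp
  qed
next
  show "?R \<subseteq> realization_set (boundary_join P)"
  proof
    fix x assume x: "x \<in> ?R"
    define \<sigma> where "\<sigma> = {a \<in> \<Union>P. x a \<noteq> 0}"
    have "\<not> B \<subseteq> \<sigma>" if "B \<in> P" for B
    proof -
      obtain a where "a \<in> B" "x a = 0" using x \<open>B \<in> P\<close> by blast
      then show ?thesis by (auto simp: \<sigma>_def)
    qed
    then have face: "\<sigma> \<in> boundary_join P"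
      by (auto simp: boundary_join_def \<sigma>_def)
    have "sum x \<sigma> = sum x (\<Union>P)"
      by (rule sum.mono_neutral_left [OF assms]) (auto simp: \<sigma>_def)
    with x have "sum x \<sigma> = 1" by simp
    moreover have "\<forall>a. a \<notin> \<sigma> \<longrightarrow> x a = 0"
      using x by (auto simp: \<sigma>_def)
    ultimately show "x \<in> realization_set (boundary_join P)"
      using x face unfolding realization_set_def by (intro UN_I [of \<sigma>]) auto
  qed
qed

section \<open>Joins of triangle boundaries are spheres\<close>

definition lift_triple :: "(nat \<Rightarrow> real) \<Rightarrow> nat \<Rightarrow> nat \<Rightarrow> real" where
  "lift_triple z j p = (if p < 2 then z (2*j + p) else 0) - min (z (2*j)) (min (z (2*j + 1)) 0)"

lemma less_3_cases: "(p::nat) < 3 \<longleftrightarrow> p = 0 \<or> p = 1 \<or> p = 2"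
  by auto

lemma lift_triple_nonneg: "p < 3 \<Longrightarrow> 0 \<le> lift_triple z j p"
  by (auto simp: lift_triple_def less_3_cases)

lemma lift_triple_has_zero: "\<exists>p<3. lift_triple z j p = 0"
proof -
  consider "min (z (2*j)) (min (z (2*j + 1)) 0) = z (2*j)"
    | "min (z (2*j)) (min (z (2*j + 1)) 0) = z (2*j + 1)"
    | "min (z (2*j)) (min (z (2*j + 1)) 0) = 0"
    unfolding min_def by argo
  then show ?thesis
  proof cases
    case 1
    then have "lift_triple z j 0 = 0" by (simp add: lift_triple_def)
    then show ?thesis by (intro exI[of _ 0]) simp
  next
    case 2
    then have "lift_triple z j 1 = 0" by (simp add: lift_triple_def)
    then show ?thesis by (intro exI[of _ 1]) simp
  next
    case 3
    then have "lift_triple z j 2 = 0" by (simp add: lift_triple_def)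
    then show ?thesis by (intro exI[of _ 2]) simp
  qed
qed

lemma lift_triple_diff: "p < 2 \<Longrightarrow> lift_triple z j p - lift_triple z j 2 = z (2*j + p)"
  by (simp add: lift_triple_def)

lemma lift_triple_of_diffs:
  fixes a :: "nat \<Rightarrow> real"
  assumes "\<forall>p<3. 0 \<le> a p" and "\<exists>p<3. a p = 0" and "c > 0"
    and "z (2*j) = (a 0 - a 2) / c" and "z (2*j + 1) = (a 1 - a 2) / c" and "p < 3"
  shows "lift_triple z j p = a p / c"
proof -
  have "0 \<le> a 0" "0 \<le> a 1" "0 \<le> a 2" and "a 0 = 0 \<or> a 1 = 0 \<or> a 2 = 0"
    using assms(1,2) by (auto simp: less_3_cases)
  then have "min (z (2*j)) (min (z (2*j + 1)) 0) = - a 2 / c"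
    unfolding assms(4,5) using \<open>c > 0\<close> by (auto simp: min_def divide_simps)
  with assms(4-6) show ?thesis
    by (auto simp: lift_triple_def less_3_cases diff_divide_distrib)
qed

lemma continuous_map_subtopology_powertop_projection [continuous_intros]:
  "continuous_map (subtopology (powertop_real UNIV) S) euclideanreal (\<lambda>x. x a)"
  by (blast intro: continuous_map_from_subtopology [OF continuous_map_product_projection])

locale triangle_blocks =
  fixes m :: nat and I :: "'a set" and e :: "nat \<Rightarrow> nat \<Rightarrow> 'a"
  assumes bij_blocks: "bij_betw (\<lambda>(j, p). e j p) ({..<m} \<times> {..<3}) I"
begin

definition block_index :: "'a \<Rightarrow> nat \<times> nat" where
  "block_index = inv_into ({..<m} \<times> {..<3}) (\<lambda>(j, p). e j p)"

lemma e_in_I: "j < m \<Longrightarrow> p < 3 \<Longrightarrow> e j p \<in> I"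
  using bij_betw_apply [OF bij_blocks, of "(j, p)"] by simp

lemma block_index_e: "j < m \<Longrightarrow> p < 3 \<Longrightarrow> block_index (e j p) = (j, p)"
  using bij_betw_inv_into_left [OF bij_blocks, of "(j, p)"] by (simp add: block_index_def)

lemma in_blockE:
  assumes "a \<in> I"
  obtains j p where "j < m" "p < 3" "a = e j p"
  using bij_betw_imp_surj_on [OF bij_blocks] assms by force

lemma sum_over_blocks: "sum h I = (\<Sum>j<m. \<Sum>p<3. h (e j p))"
proof -
  have "sum h I = (\<Sum>(j, p)\<in>{..<m} \<times> {..<3}. h (e j p))"
    using sum.reindex_bij_betw [OF bij_blocks, of h] by (simp add: case_prod_unfold)
  also have "\<dots> = (\<Sum>j<m. \<Sum>p<3. h (e j p))"
    by (simp add: sum.cartesian_product)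
  finally show ?thesis .
qed

definition blocks_simplex :: "('a \<Rightarrow> real) set" where
  "blocks_simplex = {x. (\<forall>a. 0 \<le> x a) \<and> (\<forall>a. a \<notin> I \<longrightarrow> x a = 0) \<and> sum x I = 1
                      \<and> (\<forall>j<m. \<exists>p<3. x (e j p) = 0)}"

definition sphere_set :: "(nat \<Rightarrow> real) set" where
  "sphere_set = {z. (\<Sum>i<2*m. z i ^ 2) = 1 \<and> (\<forall>i\<ge>2*m. z i = 0)}"

definition diff_coord :: "('a \<Rightarrow> real) \<Rightarrow> nat \<Rightarrow> real" where
  "diff_coord x i = x (e (i div 2) (i mod 2)) - x (e (i div 2) 2)"

definition diff_norm :: "('a \<Rightarrow> real) \<Rightarrow> real" where
  "diff_norm x = sqrt (\<Sum>i<2*m. (diff_coord x i)\<^sup>2)"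

definition to_sphere :: "('a \<Rightarrow> real) \<Rightarrow> nat \<Rightarrow> real" where
  "to_sphere x i = (if i < 2*m then diff_coord x i / diff_norm x else 0)"

definition lift_total :: "(nat \<Rightarrow> real) \<Rightarrow> real" where
  "lift_total z = (\<Sum>j<m. \<Sum>p<3. lift_triple z j p)"

definition to_simplex :: "(nat \<Rightarrow> real) \<Rightarrow> 'a \<Rightarrow> real" where
  "to_simplex z a = (if a \<in> I then case_prod (lift_triple z) (block_index a) / lift_total z else 0)"

lemma diff_norm_squared: "(diff_norm x)\<^sup>2 = (\<Sum>i<2*m. (diff_coord x i)\<^sup>2)"
  by (simp add: diff_norm_def sum_nonneg)

lemma diff_norm_pos:
  assumes x: "x \<in> blocks_simplex"
  shows "0 < diff_norm x"
proof (rule ccontr)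
  assume "\<not> 0 < diff_norm x"
  moreover have "0 \<le> (\<Sum>i<2*m. (diff_coord x i)\<^sup>2)"
    by (simp add: sum_nonneg)
  ultimately have "(\<Sum>i<2*m. (diff_coord x i)\<^sup>2) = 0"
    by (simp add: diff_norm_def)
  then have diff0: "diff_coord x i = 0" if "i < 2*m" for i
    using that by (simp add: sum_nonneg_eq_0_iff)
  have "x (e j p) = 0" if "j < m" "p < 3" for j p
  proof -
    have "diff_coord x (2*j) = 0" "diff_coord x (2*j + 1) = 0"
      using diff0 \<open>j < m\<close> by auto
    then have "x (e j 0) = x (e j 2)" "x (e j 1) = x (e j 2)"
      by (simp_all add: diff_coord_def)
    moreover obtain q where "q < 3" "x (e j q) = 0"
      using x \<open>j < m\<close> by (auto simp: blocks_simplex_def)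
    ultimately show ?thesis
      using \<open>p < 3\<close> by (auto simp: less_3_cases)
  qed
  then have "sum x I = 0" by (simp add: sum_over_blocks)
  with x show False by (simp add: blocks_simplex_def)
qed

lemma lift_total_pos:
  assumes z: "z \<in> sphere_set"
  shows "0 < lift_total z"
proof -
  have "lift_total z \<ge> 0"
    unfolding lift_total_def by (intro sum_nonneg) (simp add: lift_triple_nonneg)
  moreover have "lift_total z \<noteq> 0"
  proof
    assume "lift_total z = 0"
    then have "(\<Sum>p<3. lift_triple z j p) = 0" if "j < m" for j
      using that unfolding lift_total_def
      by (subst (asm) sum_nonneg_eq_0_iff) (auto intro!: sum_nonneg simp: lift_triple_nonneg)
    then have "lift_triple z j p = 0" if "j < m" "p < 3" for j p
      using that by (subst (asm) sum_nonneg_eq_0_iff) (auto simp: lift_triple_nonneg)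
    then have z0: "z (2*j + p) = 0" if "j < m" "p < 2" for j p
      using lift_triple_diff [OF \<open>p < 2\<close>, of z j] that by simp
    have "z i = 0" if "i < 2*m" for i
      using z0 [of "i div 2" "i mod 2"] that by simp
    then have "(\<Sum>i<2*m. z i ^ 2) = 0" by simp
    with z show False by (simp add: sphere_set_def)
  qed
  ultimately show ?thesis by simp
qed

lemma to_simplex_e: "j < m \<Longrightarrow> p < 3 \<Longrightarrow> to_simplex z (e j p) = lift_triple z j p / lift_total z"
  by (simp add: to_simplex_def e_in_I block_index_e)

lemma to_sphere_in_sphere_set:
  assumes x: "x \<in> blocks_simplex"
  shows "to_sphere x \<in> sphere_set"
proof -
  have "(\<Sum>i<2*m. to_sphere x i ^ 2) = (\<Sum>i<2*m. (diff_coord x i)\<^sup>2) / (diff_norm x)\<^sup>2"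
    by (simp add: to_sphere_def power_divide sum_divide_distrib)
  also have "\<dots> = 1"
    using diff_norm_pos [OF x] by (simp flip: diff_norm_squared)
  finally show ?thesis by (simp add: sphere_set_def to_sphere_def)
qed

lemma to_simplex_in_blocks_simplex:
  assumes z: "z \<in> sphere_set"
  shows "to_simplex z \<in> blocks_simplex"
proof -
  have S: "0 < lift_total z" using lift_total_pos [OF z] .
  have "0 \<le> to_simplex z a" for a
  proof (cases "a \<in> I")
    case True
    then obtain j p where "j < m" "p < 3" "a = e j p"
      by (rule in_blockE)
    then show ?thesis using S by (simp add: to_simplex_e lift_triple_nonneg)
  qed (simp add: to_simplex_def)
  moreover have "sum (to_simplex z) I = 1"
    using S by (simp add: sum_over_blocks to_simplex_e lift_total_def flip: sum_divide_distrib)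
  moreover have "\<exists>p<3. to_simplex z (e j p) = 0" if "j < m" for j
    using lift_triple_has_zero [of z j] that by (auto simp: to_simplex_e)
  ultimately show ?thesis by (simp add: blocks_simplex_def to_simplex_def)
qed

lemma to_simplex_to_sphere:
  assumes x: "x \<in> blocks_simplex"
  shows "to_simplex (to_sphere x) = x"
proof
  fix a
  have N: "0 < diff_norm x" using diff_norm_pos [OF x] .
  have lift: "lift_triple (to_sphere x) j p = x (e j p) / diff_norm x" if "j < m" "p < 3" for j p
    using x N \<open>j < m\<close> \<open>p < 3\<close>
    by (intro lift_triple_of_diffs [where a = "\<lambda>p. x (e j p)"])
       (auto simp: blocks_simplex_def to_sphere_def diff_coord_def)
  have "lift_total (to_sphere x) = sum x I / diff_norm x"
    by (simp add: lift_total_def sum_over_blocks lift sum_divide_distrib)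
  then have total: "lift_total (to_sphere x) = 1 / diff_norm x"
    using x by (simp add: blocks_simplex_def)
  show "to_simplex (to_sphere x) a = x a"
  proof (cases "a \<in> I")
    case True
    then obtain j p where "j < m" "p < 3" "a = e j p"
      by (rule in_blockE)
    then show ?thesis using lift total N by (auto simp: to_simplex_e)
  next
    case False
    then show ?thesis using x by (simp add: to_simplex_def blocks_simplex_def)
  qed
qed

lemma to_sphere_to_simplex:
  assumes z: "z \<in> sphere_set"
  shows "to_sphere (to_simplex z) = z"
proof
  fix i
  have S: "0 < lift_total z" using lift_total_pos [OF z] .
  have diff: "diff_coord (to_simplex z) i = z i / lift_total z" if "i < 2*m" for i
  proof -
    have "i div 2 < m" "i mod 2 < 2" using that by auto
    then have "diff_coord (to_simplex z) i
        = (lift_triple z (i div 2) (i mod 2) - lift_triple z (i div 2) 2) / lift_total z"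
      by (simp add: diff_coord_def to_simplex_e diff_divide_distrib)
    also have "\<dots> = z i / lift_total z"
      using lift_triple_diff [OF \<open>i mod 2 < 2\<close>] by simp
    finally show ?thesis .
  qed
  have "(diff_norm (to_simplex z))\<^sup>2 = (\<Sum>i<2*m. (z i)\<^sup>2) / (lift_total z)\<^sup>2"
    by (simp add: diff_norm_squared diff power_divide sum_divide_distrib)
  also have "\<dots> = (1 / lift_total z)\<^sup>2"
    using z by (simp add: sphere_set_def power_divide)
  finally have "(diff_norm (to_simplex z))\<^sup>2 = (1 / lift_total z)\<^sup>2" .
  moreover have "0 \<le> diff_norm (to_simplex z)"
    by (simp add: diff_norm_def sum_nonneg)
  ultimately have "diff_norm (to_simplex z) = 1 / lift_total z"
    using S by simp
  then show "to_sphere (to_simplex z) i = z i"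
    using diff [of i] S z by (auto simp: to_sphere_def sphere_set_def)
qed

lemma continuous_map_to_sphere:
  "continuous_map (subtopology (powertop_real UNIV) blocks_simplex)
     (subtopology (powertop_real UNIV) sphere_set) to_sphere"
proof -
  let ?X = "subtopology (powertop_real UNIV) blocks_simplex"
  have diff: "continuous_map ?X euclideanreal (\<lambda>x. diff_coord x i)" for i
    unfolding diff_coord_def by (intro continuous_intros)
  have norm: "continuous_map ?X euclideanreal diff_norm"
    unfolding diff_norm_def [abs_def] by (intro continuous_intros diff) auto
  have "continuous_map ?X euclideanreal (\<lambda>x. to_sphere x i)" for i
  proof (cases "i < 2*m")
    case True
    then show ?thesis
      unfolding to_sphere_def using diff_norm_pos
      by (simp, intro continuous_map_real_divide diff norm) fastforce
  qed (simp add: to_sphere_def)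
  then show ?thesis
    by (auto simp: continuous_map_in_subtopology continuous_map_componentwise_UNIV
        to_sphere_in_sphere_set)
qed

lemma continuous_map_to_simplex:
  "continuous_map (subtopology (powertop_real UNIV) sphere_set)
     (subtopology (powertop_real UNIV) blocks_simplex) to_simplex"
proof -
  let ?Z = "subtopology (powertop_real UNIV) sphere_set"
  have lift: "continuous_map ?Z euclideanreal (\<lambda>z. lift_triple z j p)" for j p
    unfolding lift_triple_def by (cases "p < 2"; simp; intro continuous_intros; simp)
  have total: "continuous_map ?Z euclideanreal lift_total"
    unfolding lift_total_def [abs_def] by (intro continuous_intros lift) auto
  have "continuous_map ?Z euclideanreal (\<lambda>z. to_simplex z a)" for a
  proof (cases "a \<in> I")
    case True
    then show ?thesis
      unfolding to_simplex_def using lift_total_pos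
      by (simp add: case_prod_unfold, intro continuous_map_real_divide lift total) fastforce
  qed (simp add: to_simplex_def)
  then show ?thesis
    by (auto simp: continuous_map_in_subtopology continuous_map_componentwise_UNIV
        to_simplex_in_blocks_simplex)
qed

lemma blocks_simplex_homeomorphic_sphere_set:
  "subtopology (powertop_real UNIV) blocks_simplex
     homeomorphic_space subtopology (powertop_real UNIV) sphere_set"
  by (rule homeomorphic_maps_imp_homeomorphic_space [of _ _ to_sphere to_simplex])
     (simp add: homeomorphic_maps_def continuous_map_to_sphere continuous_map_to_simplex
       to_simplex_to_sphere to_sphere_to_simplex)

lemma nsphere_eq_sphere_set:
  assumes "1 \<le> m"
  shows "nsphere (2*m - 1) = subtopology (powertop_real UNIV) sphere_set"
proof -
  have "{..2*m - 1} = {..<2*m}" and "\<And>i. 2*m - 1 < i \<longleftrightarrow> 2*m \<le> i"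
    using assms by auto
  then show ?thesis by (simp add: nsphere sphere_set_def)
qed

lemma blocks_Union: "\<Union>((\<lambda>j. e j ` {..<3}) ` {..<m}) = I"
  using bij_betw_imp_surj_on [OF bij_blocks] by auto

lemma realization_boundary_join_homeomorphic_nsphere:
  assumes "1 \<le> m"
  shows "realization (boundary_join ((\<lambda>j. e j ` {..<3}) ` {..<m}))
           homeomorphic_space nsphere (2*m - 1)"
proof -
  have "finite I" using bij_betw_finite [OF bij_blocks] by simp
  then have "realization_set (boundary_join ((\<lambda>j. e j ` {..<3}) ` {..<m})) = blocks_simplex"
    by (simp add: realization_set_boundary_join blocks_Union blocks_simplex_def)
       (simp only: Ball_def Bex_def lessThan_iff)
  then show ?thesis
    unfolding realization_def nsphere_eq_sphere_set [OF assms]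
    using blocks_simplex_homeomorphic_sphere_set by simp
qed

end

lemma disjoint_family_enumeration:
  assumes "finite J" and "disjoint_family_on B J"
    and "\<And>v. v \<in> J \<Longrightarrow> finite (B v) \<and> card (B v) = k"
  obtains e where "bij_betw (\<lambda>(j, p). e j p) ({..<card J} \<times> {..<k}) (\<Union>(B ` J))"
    and "B ` J = (\<lambda>j. e j ` {..<k}) ` {..<card J}"
proof -
  obtain vv where vv: "bij_betw vv {..<card J} J"
    using ex_bij_betw_nat_finite [OF assms(1)] by (auto simp: atLeast0LessThan)
  have "\<forall>v\<in>J. \<exists>h. bij_betw h {..<k} (B v)"
    using ex_bij_betw_nat_finite assms(3) by (metis atLeast0LessThan)
  then obtain hh where hh: "\<And>v. v \<in> J \<Longrightarrow> bij_betw (hh v) {..<k} (B v)"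
    by metis
  define e where "e j p = hh (vv j) p" for j p
  have "e j ` {..<k} = B (vv j)" if "j < card J" for j
    using hh [of "vv j"] bij_betw_apply [OF vv] that by (simp add: e_def bij_betw_def)
  moreover have "B ` J = (\<lambda>j. B (vv j)) ` {..<card J}"
    using bij_betw_imp_surj_on [OF vv] by (metis image_image)
  ultimately have blocks: "B ` J = (\<lambda>j. e j ` {..<k}) ` {..<card J}"
    by simp
  have image: "(\<lambda>(j, p). e j p) ` ({..<card J} \<times> {..<k}) = \<Union>(B ` J)"
    unfolding blocks by (auto simp: Sigma_def image_UN)
  have "card (\<Union>(B ` J)) = card J * k"
    using card_UN_disjoint' [OF assms(2)] assms(1,3) by simp
  then have "inj_on (\<lambda>(j, p). e j p) ({..<card J} \<times> {..<k})"
    by (intro eq_card_imp_inj_on) (simp_all add: image card_cartesian_product)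
  with image have "bij_betw (\<lambda>(j, p). e j p) ({..<card J} \<times> {..<k}) (\<Union>(B ` J))"
    by (simp add: bij_betw_def)
  then show ?thesis using blocks by (rule that)
qed

lemma realization_boundary_join_triangles_homeomorphic_nsphere:
  assumes "finite J" and "J \<noteq> {}" and "disjoint_family_on B J"
    and "\<And>v. v \<in> J \<Longrightarrow> card (B v) = 3"
  shows "realization (boundary_join (B ` J)) homeomorphic_space nsphere (2 * card J - 1)"
proof -
  have "finite (B v) \<and> card (B v) = 3" if "v \<in> J" for v
    using assms(4) [OF that] by (simp add: card_ge_0_finite)
  then obtain e where e: "bij_betw (\<lambda>(j, p). e j p) ({..<card J} \<times> {..<3::nat}) (\<Union>(B ` J))"
    and blocks: "B ` J = (\<lambda>j. e j ` {..<3}) ` {..<card J}"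
    by (rule disjoint_family_enumeration [OF assms(1,3)])
  interpret triangle_blocks "card J" "\<Union>(B ` J)" e
    using e by unfold_locales
  show ?thesis
    unfolding blocks using assms(1,2)
    by (intro realization_boundary_join_homeomorphic_nsphere) (simp add: Suc_le_eq card_gt_0_iff)
qed

section \<open>2-matchings of clawed graphs\<close>

definition claw_star :: "'v set \<Rightarrow> 'v set set \<Rightarrow> 'v \<Rightarrow> 'v cvert set set" where
  "claw_star V E v = {c \<in> claw_edges V E. Inl v \<in> c}"

lemma simple_graph_edge_subset: "simple_graph V E \<Longrightarrow> e \<in> E \<Longrightarrow> e \<subseteq> V"
  unfolding simple_graph_def by fastforce

lemma simple_graph_finite_edges: "simple_graph V E \<Longrightarrow> finite E"
  by (meson Pow_iff finite_Pow_iff finite_subset simple_graph_def simple_graph_edge_subset subsetI)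

lemma claw_edge_Inl_unique: "c \<in> claw_edges V E \<Longrightarrow> Inl v \<in> c \<Longrightarrow> Inl w \<in> c \<Longrightarrow> v = w"
  by (auto simp: claw_edges_def)

lemma disjoint_family_claw_star: "disjoint_family (claw_star V E)"
  unfolding disjoint_family_on_def claw_star_def by (auto dest: claw_edge_Inl_unique)

lemma claw_star_eq:
  fixes V :: "'v set" and E :: "'v set set" and v :: 'v
  assumes "v \<in> V"
  shows "claw_star V E v = (\<lambda>e. {Inl v, Inr (Inl e)}) ` {e \<in> E. v \<in> e}
                         \<union> (\<lambda>i. {Inl v, Inr (Inr (v, i))}) ` {..<3 - degree E v}"
  using assms by (auto simp: claw_star_def claw_edges_def)

lemma card_claw_star:
  fixes V :: "'v set" and E :: "'v set set" and v :: 'v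
  assumes "simple_graph V E" and "max_degree_le V E 3" and "v \<in> V"
  shows "card (claw_star V E v) = 3"
proof -
  have "inj_on (\<lambda>e. {Inl v, Inr (Inl e)} :: 'v cvert set) {e \<in> E. v \<in> e}"
    and "inj_on (\<lambda>i. {Inl v, Inr (Inr (v, i))} :: 'v cvert set) {..<3 - degree E v}"
    by (auto simp: inj_on_def doubleton_eq_iff)
  then have "card (claw_star V E v) = card {e \<in> E. v \<in> e} + (3 - degree E v)"
    unfolding claw_star_eq [OF assms(3)] using simple_graph_finite_edges [OF assms(1)]
    by (subst card_Un_disjoint) (auto simp: card_image)
  with assms(2,3) show ?thesis by (simp add: degree_def max_degree_le_def)
qed

lemma Inl_in_claw_edge:
  assumes "simple_graph V E" and "c \<in> claw_edges V E" and "Inl v \<in> c"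
  shows "v \<in> V"
  using assms by (auto simp: claw_edges_def dest: simple_graph_edge_subset)

lemma claw_edges_eq_Union_claw_star:
  assumes "simple_graph V E"
  shows "claw_edges V E = \<Union>(claw_star V E ` V)"
proof -
  have "\<exists>v. Inl v \<in> c" if "c \<in> claw_edges V E" for c
    using that by (auto simp: claw_edges_def)
  then show ?thesis
    unfolding claw_star_def using Inl_in_claw_edge [OF assms] by blast
qed

lemma card_claw_edges:
  assumes "simple_graph V E" and "max_degree_le V E 3"
  shows "card (claw_edges V E) = 3 * card V"
proof -
  have "finite V" using assms(1) by (simp add: simple_graph_def)
  moreover have "card (claw_star V E v) = 3" if "v \<in> V" for v
    using card_claw_star [OF assms that] .
  ultimately show ?thesis
    unfolding claw_edges_eq_Union_claw_star [OF assms(1)]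
    using disjoint_family_on_mono [OF subset_UNIV disjoint_family_claw_star]
    by (subst card_UN_disjoint') (auto intro: card_ge_0_finite)
qed

lemma finite_claw_edges:
  assumes "simple_graph V E"
  shows "finite (claw_edges V E)"
  unfolding claw_edges_eq_Union_claw_star [OF assms]
  using simple_graph_finite_edges [OF assms] assms by (auto simp: claw_star_eq simple_graph_def)

lemma card_claw_edges_at_Inr_le_2:
  assumes "simple_graph V E"
  shows "card {c \<in> claw_edges V E. Inr y \<in> c} \<le> 2"
proof (cases y)
  case (Inl e)
  show ?thesis
  proof (cases "e \<in> E")
    case True
    then obtain u w where "e = {u, w}"
      using assms by (auto simp: simple_graph_def)
    with Inl have "{c \<in> claw_edges V E. Inr y \<in> c} \<subseteq> {{Inl u, Inr y}, {Inl w, Inr y}}"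
      by (auto simp: claw_edges_def)
    then have "card {c \<in> claw_edges V E. Inr y \<in> c} \<le> card {{Inl u, Inr y}, {Inl w, Inr y}}"
      by (intro card_mono) auto
    also have "\<dots> \<le> 2"
      by (simp add: card_insert_if)
    finally show ?thesis .
  next
    case False
    with Inl have "{c \<in> claw_edges V E. Inr y \<in> c} = {}"
      by (auto simp: claw_edges_def)
    then show ?thesis by (metis card.empty zero_le)
  qed
next
  case (Inr vi)
  then have "{c \<in> claw_edges V E. Inr y \<in> c} \<subseteq> {{Inl (fst vi), Inr y}}"
    by (auto simp: claw_edges_def)
  then have "card {c \<in> claw_edges V E. Inr y \<in> c} \<le> card {{Inl (fst vi), Inr y}}"
    by (intro card_mono) auto
  then show ?thesis by simp
qed

lemma card_Int_less_card_iff: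
  assumes "finite S"
  shows "card (S \<inter> M) < card S \<longleftrightarrow> \<not> S \<subseteq> M"
proof
  assume "card (S \<inter> M) < card S"
  then show "\<not> S \<subseteq> M" by (auto simp: Int_absorb2)
next
  assume "\<not> S \<subseteq> M"
  then have "S \<inter> M \<subset> S" by blast
  then show "card (S \<inter> M) < card S" by (rule psubset_card_mono [OF assms])
qed

lemma claw_star_outside:
  assumes "simple_graph V E" and "v \<notin> V"
  shows "claw_star V E v = {}"
  using assms Inl_in_claw_edge [OF assms(1)] by (auto simp: claw_star_def)

lemma two_matching_claw_edges_iff:
  assumes "simple_graph V E" and "max_degree_le V E 3"
  shows "two_matching (claw_edges V E) M \<longleftrightarrow> M \<subseteq> claw_edges V E \<and> (\<forall>v\<in>V. \<not> claw_star V E v \<subseteq> M)"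
proof (cases "M \<subseteq> claw_edges V E")
  case True
  have at_Inl: "{c \<in> M. Inl v \<in> c} = claw_star V E v \<inter> M" for v
    using True by (auto simp: claw_star_def)
  have at_Inr: "card {c \<in> M. Inr y \<in> c} \<le> 2" for y
  proof -
    have "card {c \<in> M. Inr y \<in> c} \<le> card {c \<in> claw_edges V E. Inr y \<in> c}"
      using True finite_claw_edges [OF assms(1)] by (intro card_mono) auto
    then show ?thesis using card_claw_edges_at_Inr_le_2 [OF assms(1), of y] by linarith
  qed
  have at_claw_star: "card (claw_star V E v \<inter> M) \<le> 2 \<longleftrightarrow> \<not> claw_star V E v \<subseteq> M"
    if "v \<in> V" for v
    using card_Int_less_card_iff [of "claw_star V E v" M] card_claw_star [OF assms that]
    by (simp add: card_ge_0_finite) linarith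
  have "(\<forall>x. card {c \<in> M. x \<in> c} \<le> 2) \<longleftrightarrow> (\<forall>v. card (claw_star V E v \<inter> M) \<le> 2)"
  proof (intro iffI allI)
    fix v assume "\<forall>x. card {c \<in> M. x \<in> c} \<le> 2"
    then show "card (claw_star V E v \<inter> M) \<le> 2"
      by (simp only: at_Inl [symmetric])
  next
    fix x assume H: "\<forall>v. card (claw_star V E v \<inter> M) \<le> 2"
    show "card {c \<in> M. x \<in> c} \<le> 2"
    proof (cases x)
      case (Inl v)
      then show ?thesis using H by (simp only: at_Inl)
    next
      case (Inr y)
      then show ?thesis using at_Inr by (simp only:)
    qed
  qed
  also have "\<dots> \<longleftrightarrow> (\<forall>v\<in>V. \<not> claw_star V E v \<subseteq> M)"
  proof (intro iffI ballI allI)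
    fix v assume "\<forall>v. card (claw_star V E v \<inter> M) \<le> 2" and "v \<in> V"
    then show "\<not> claw_star V E v \<subseteq> M" using at_claw_star by blast
  next
    fix v assume "\<forall>v\<in>V. \<not> claw_star V E v \<subseteq> M"
    then show "card (claw_star V E v \<inter> M) \<le> 2"
      using at_claw_star claw_star_outside [OF assms(1)] by (cases "v \<in> V") auto
  qed
  finally show ?thesis
    using True by (simp add: two_matching_def)
qed (simp add: two_matching_def)

lemma two_matching_complex_claw_edges:
  assumes "simple_graph V E" and "max_degree_le V E 3"
  shows "two_matching_complex (claw_edges V E) = boundary_join (claw_star V E ` V)"
  by (auto simp: two_matching_complex_def boundary_join_def two_matching_claw_edges_iff [OF assms]
      simp flip: claw_edges_eq_Union_claw_star [OF assms(1)])

theorem mainTheorem4: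
  fixes V :: "'v set" and E :: "'v set set"
  assumes "simple_graph V E" and "V \<noteq> {}" and "max_degree_le V E 3"
  shows "\<exists>k::nat. 3 * (k + 1) = 2 * card (claw_edges V E)
           \<and> realization (two_matching_complex (claw_edges V E)) homotopy_equivalent_space nsphere k"
proof -
  have "finite V" using assms(1) by (simp add: simple_graph_def)
  have "realization (two_matching_complex (claw_edges V E))
          homeomorphic_space nsphere (2 * card V - 1)"
    unfolding two_matching_complex_claw_edges [OF assms(1,3)]
  proof (rule realization_boundary_join_triangles_homeomorphic_nsphere)
    show "disjoint_family_on (claw_star V E) V"
      using disjoint_family_claw_star by (rule disjoint_family_on_mono [OF subset_UNIV])
    show "\<And>v. v \<in> V \<Longrightarrow> card (claw_star V E v) = 3"
      using card_claw_star [OF assms(1,3)] .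
  qed (use \<open>finite V\<close> assms(2) in auto)
  moreover have "3 * (2 * card V - 1 + 1) = 2 * card (claw_edges V E)"
    using card_claw_edges [OF assms(1,3)] \<open>finite V\<close> assms(2) by (simp add: card_gt_0_iff)
  ultimately show ?thesis
    using homeomorphic_imp_homotopy_equivalent_space by blast
qed

end
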